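(* Let $M$ be a nonderogatory $d\times d$ complex matrix with minimal polynomial $\mathbf p$, and let $\mathbf p_+,\mathbf p_-,\boldsymbol\chi\in\mathbb C[X]$ be such that $\mathbf p_+\mathbf p_-$ divides $\mathbf p$ and $\boldsymbol\chi$ is relatively prime to $\mathbf p$. Then $\mathfrak B(\mathbf p_+,\mathbf p_-,\boldsymbol\chi)$ is a commutative algebra of block Toeplitz matrices (a linear subspace of $\mathcal T_{n,d}$ closed under multiplication and commutative).
   Context: A nonderogatory matrix is one whose minimal polynomial equals its characteristic polynomial; $\mathcal P(M)$ denotes the algebra of polynomials in $M$. With $\mathbf q=\mathbf p/(\mathbf p_+\mathbf p_-)$, $\mathfrak B(\mathbf p_+,\mathbf p_-,\boldsymbol\chi)$ is the set of $n\times n$ block Toeplitz matrices $A=(A_{i-j})_{i,j=0}^{n-1}$ such that (a) $A_i\in\mathcal P(M)$ for all $-(n-1)\le i\le n-1$; (b)–(c) for each $i=1,\dots,n-1$ there exist polynomials $\mathbf a_i,\mathbf a_{i-n}\in\mathbb C[X]$ with $A_i=\mathbf p_+(M)\mathbf a_i(M)$, $A_{i-n}=\mathbf p_-(M)\mathbf a_{i-n}(M)$, and $\mathbf q$ divides $\mathbf a_i-\boldsymbol\chi\,\mathbf a_{i-n}$. *)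

theory Defs
  imports "Jordan_Normal_Form.Char_Poly"
begin

definition poly_mat :: "'a :: comm_ring_1 poly \<Rightarrow> 'a mat \<Rightarrow> 'a mat" where
  "poly_mat p M = mat (dim_row M) (dim_row M)
     (\<lambda>(i,j). \<Sum>k\<le>degree p. coeff p k * (M ^\<^sub>m k) $$ (i,j))"

definition poly_algebra :: "'a :: comm_ring_1 mat \<Rightarrow> 'a mat set" where
  "poly_algebra M = {poly_mat a M | a. True}"

definition is_min_poly :: "'a :: field mat \<Rightarrow> 'a poly \<Rightarrow> bool" where
  "is_min_poly M p \<longleftrightarrow> monic p \<and> poly_mat p M = 0\<^sub>m (dim_row M) (dim_row M) \<and>
     (\<forall>q. poly_mat q M = 0\<^sub>m (dim_row M) (dim_row M) \<longrightarrow> p dvd q)"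

definition nonderogatory :: "'a :: field mat \<Rightarrow> bool" where
  "nonderogatory M \<longleftrightarrow> is_min_poly M (char_poly M)"

definition block_toeplitz :: "nat \<Rightarrow> nat \<Rightarrow> (int \<Rightarrow> 'a mat) \<Rightarrow> 'a mat" where
  "block_toeplitz n d A = mat (n*d) (n*d)
     (\<lambda>(r,c). A (int (r div d) - int (c div d)) $$ (r mod d, c mod d))"

definition toeplitz_space :: "nat \<Rightarrow> nat \<Rightarrow> 'a mat set" where
  "toeplitz_space n d = {block_toeplitz n d A | A. \<forall>i. A i \<in> carrier_mat d d}"

definition frakB :: "nat \<Rightarrow> complex mat \<Rightarrow> complex poly \<Rightarrow> complex poly \<Rightarrow> complex poly \<Rightarrow> complex poly
     \<Rightarrow> complex mat set" where
  "frakB n M p pp pm chi =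
     {block_toeplitz n (dim_row M) A | A.
        (\<forall>i::int. - (int n - 1) \<le> i \<and> i \<le> int n - 1 \<longrightarrow> A i \<in> poly_algebra M) \<and>
        (\<forall>i::int. 1 \<le> i \<and> i \<le> int n - 1 \<longrightarrow>
           (\<exists>ai ain. A i = poly_mat (pp * ai) M \<and> A (i - int n) = poly_mat (pm * ain) M \<and>
                     (p div (pp * pm)) dvd (ai - chi * ain)))}"

end

theory Submission
  imports Defs
begin

text \<open>
  Write the blocks of a matrix in B as A_i = a_i(M) with polynomials a_i. Multiplied through by
  p+ p-, conditions (b)--(c) say that p+ divides a_i, p- divides a_(i-n) and p divides
  p- a_i - chi p+ a_(i-n); for two such sequences a, b this gives p | a_s b_(t-n) - a_(s-n) b_t.
  The (I,J) block of a product is the sum of a_(I-k) b_(k-J) over k < n, a window of n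
  consecutive terms of the convolution at m = I - J. Sliding the window by one step changes it
  by such a cross difference, so modulo p, i.e. after evaluation at M, all these windows agree.
  Hence AB and BA are both the block Toeplitz matrix of one sequence c, which again satisfies
  the condition.
\<close>

lemma poly_mat_carrier: "M \<in> carrier_mat d d \<Longrightarrow> poly_mat a M \<in> carrier_mat d d"
  unfolding poly_mat_def by auto

lemma dim_poly_mat [simp]:
  "dim_row (poly_mat a M) = dim_row M" "dim_col (poly_mat a M) = dim_row M"
  unfolding poly_mat_def by auto

lemma poly_mat_index:
  assumes M: "M \<in> carrier_mat d d" and "degree a \<le> N" and "i < d" "j < d"
  shows "poly_mat a M $$ (i,j) = (\<Sum>k\<le>N. coeff a k * (M ^\<^sub>m k) $$ (i,j))"
proof -
  have "poly_mat a M $$ (i,j) = (\<Sum>k\<le>degree a. coeff a k * (M ^\<^sub>m k) $$ (i,j))"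
    using assms unfolding poly_mat_def by auto
  also have "\<dots> = (\<Sum>k\<le>N. coeff a k * (M ^\<^sub>m k) $$ (i,j))"
    by (rule sum.mono_neutral_left) (use assms in \<open>auto simp: coeff_eq_0\<close>)
  finally show ?thesis .
qed

lemma poly_mat_0: "M \<in> carrier_mat d d \<Longrightarrow> poly_mat 0 M = 0\<^sub>m d d"
  unfolding poly_mat_def by (intro eq_matI) auto

lemma poly_mat_add:
  assumes M: "M \<in> carrier_mat d d"
  shows "poly_mat (a + b) M = poly_mat a M + poly_mat b M"
proof (rule eq_matI)
  fix i j assume "i < dim_row (poly_mat a M + poly_mat b M)" "j < dim_col (poly_mat a M + poly_mat b M)"
  then have ij: "i < d" "j < d" using M by auto
  let ?N = "max (degree a) (degree b)"
  have "degree (a + b) \<le> ?N" by (rule degree_add_le) auto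
  then show "poly_mat (a + b) M $$ (i,j) = (poly_mat a M + poly_mat b M) $$ (i,j)"
    using ij M by (simp add: poly_mat_index[OF M _ ij, of _ ?N] distrib_right sum.distrib)
qed (use M in auto)

lemma poly_mat_smult:
  assumes M: "M \<in> carrier_mat d d"
  shows "poly_mat (Polynomial.smult c a) M = c \<cdot>\<^sub>m poly_mat a M"
proof (rule eq_matI)
  fix i j assume "i < dim_row (c \<cdot>\<^sub>m poly_mat a M)" "j < dim_col (c \<cdot>\<^sub>m poly_mat a M)"
  then have ij: "i < d" "j < d" using M by auto
  have "degree (Polynomial.smult c a) \<le> degree a" by (rule degree_smult_le)
  then show "poly_mat (Polynomial.smult c a) M $$ (i,j) = (c \<cdot>\<^sub>m poly_mat a M) $$ (i,j)"
    using ij M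
    by (simp add: poly_mat_index[OF M _ ij, of _ "degree a"] sum_distrib_left mult.assoc)
qed (use M in auto)

lemma poly_mat_pCons:
  assumes M: "M \<in> carrier_mat d d"
  shows "poly_mat (pCons c a) M = c \<cdot>\<^sub>m 1\<^sub>m d + poly_mat a M * M"
proof (rule eq_matI)
  fix i j assume "i < dim_row (c \<cdot>\<^sub>m 1\<^sub>m d + poly_mat a M * M)"
    "j < dim_col (c \<cdot>\<^sub>m 1\<^sub>m d + poly_mat a M * M)"
  then have ij: "i < d" "j < d" using M by auto
  have "poly_mat (pCons c a) M $$ (i,j)
      = (\<Sum>k\<le>Suc (degree a). coeff (pCons c a) k * (M ^\<^sub>m k) $$ (i,j))"
    by (rule poly_mat_index[OF M degree_pCons_le ij])
  also have "\<dots> = c * 1\<^sub>m d $$ (i,j) + (\<Sum>k\<le>degree a. coeff a k * (M ^\<^sub>m Suc k) $$ (i,j))"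
    using M by (subst sum.atMost_Suc_shift) (simp del: pow_mat.simps(2) sum.atMost_Suc)
  also have "(\<Sum>k\<le>degree a. coeff a k * (M ^\<^sub>m Suc k) $$ (i,j))
      = (\<Sum>l<d. (\<Sum>k\<le>degree a. coeff a k * (M ^\<^sub>m k) $$ (i,l)) * M $$ (l,j))"
    using M ij
    by (simp add: scalar_prod_def lessThan_atLeast0 sum_distrib_left sum_distrib_right
        mult.assoc sum.swap[of _ "{..degree a}"])
  also have "\<dots> = (poly_mat a M * M) $$ (i,j)"
    using M ij by (simp add: scalar_prod_def lessThan_atLeast0 poly_mat_index[OF M order.refl])
  finally show "poly_mat (pCons c a) M $$ (i,j) = (c \<cdot>\<^sub>m 1\<^sub>m d + poly_mat a M * M) $$ (i,j)"
    using ij M by simp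
qed (use M in auto)

lemma poly_mat_mult_commute_mat:
  assumes M: "M \<in> carrier_mat d d"
  shows "poly_mat a M * M = M * poly_mat a M"
proof (induction a rule: pCons_induct)
  case 0
  then show ?case using M by (simp add: poly_mat_0[OF M])
next
  case (pCons c a)
  have A: "poly_mat a M \<in> carrier_mat d d" by (rule poly_mat_carrier[OF M])
  have "poly_mat (pCons c a) M * M = c \<cdot>\<^sub>m M + poly_mat a M * M * M"
    unfolding poly_mat_pCons[OF M] using M A
    by (simp add: add_mult_distrib_mat[of _ d d] mult_smult_assoc_mat[of _ d d])
  also have "\<dots> = M * (c \<cdot>\<^sub>m 1\<^sub>m d) + M * (poly_mat a M * M)"
    using pCons.IH M A by (simp add: mult_smult_distrib[OF M one_carrier_mat])
  also have "\<dots> = M * poly_mat (pCons c a) M"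
    unfolding poly_mat_pCons[OF M]
    by (rule mult_add_distrib_mat[OF M smult_carrier_mat[OF one_carrier_mat] mult_carrier_mat[OF A M],
          symmetric])
  finally show ?case .
qed

lemma poly_mat_mult:
  assumes M: "M \<in> carrier_mat d d"
  shows "poly_mat (a * b) M = poly_mat a M * poly_mat b M"
proof (induction a rule: pCons_induct)
  case 0
  then show ?case using M by (simp add: poly_mat_0[OF M])
next
  case (pCons c a)
  have C: "\<And>x. poly_mat x M \<in> carrier_mat d d" by (rule poly_mat_carrier[OF M])
  have "poly_mat (pCons 0 (a * b)) M = poly_mat (a * b) M * M"
    using M C by (intro eq_matI) (auto simp: poly_mat_pCons[OF M])
  moreover have "pCons c a * b = Polynomial.smult c b + pCons 0 (a * b)" by simp
  ultimately have "poly_mat (pCons c a * b) M = c \<cdot>\<^sub>m poly_mat b M + poly_mat (a * b) M * M"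
    using M C by (simp add: poly_mat_add[OF M] poly_mat_smult[OF M])
  also have "\<dots> = c \<cdot>\<^sub>m poly_mat b M + poly_mat a M * (M * poly_mat b M)"
    using pCons.IH M C by (simp add: poly_mat_mult_commute_mat[OF M] assoc_mult_mat[OF C C M])
  also have "\<dots> = (c \<cdot>\<^sub>m 1\<^sub>m d) * poly_mat b M + (poly_mat a M * M) * poly_mat b M"
    using M C by (simp add: mult_smult_assoc_mat[OF one_carrier_mat C] assoc_mult_mat[OF C M C])
  also have "\<dots> = (c \<cdot>\<^sub>m 1\<^sub>m d + poly_mat a M * M) * poly_mat b M"
    by (rule add_mult_distrib_mat[OF smult_carrier_mat[OF one_carrier_mat] mult_carrier_mat[OF C M] C,
          symmetric])
  also have "\<dots> = poly_mat (pCons c a) M * poly_mat b M"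
    by (simp add: poly_mat_pCons[OF M])
  finally show ?case .
qed

lemma poly_mat_sum_index:
  assumes M: "M \<in> carrier_mat d d" and "i < d" "j < d"
  shows "poly_mat (\<Sum>k\<in>K. f k) M $$ (i,j) = (\<Sum>k\<in>K. poly_mat (f k) M $$ (i,j))"
proof (induction K rule: infinite_finite_induct)
  case (insert x F)
  then show ?case using assms poly_mat_carrier[OF M] by (simp add: poly_mat_add[OF M])
qed (use assms in \<open>simp_all add: poly_mat_0[OF M]\<close>)

lemma poly_mat_eq_iff_min_poly_dvd:
  assumes M: "M \<in> carrier_mat d d" and p: "is_min_poly M p"
  shows "poly_mat u M = poly_mat v M \<longleftrightarrow> p dvd u - v"
proof
  assume uv: "poly_mat u M = poly_mat v M"
  have "poly_mat (u - v) M = poly_mat u M + poly_mat (- v) M"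
    by (simp add: poly_mat_add[OF M, symmetric])
  also have "\<dots> = poly_mat (v + - v) M"
    by (simp only: uv poly_mat_add[OF M])
  finally show "p dvd u - v" using p M unfolding is_min_poly_def by (simp add: poly_mat_0)
next
  assume "p dvd u - v"
  then obtain r where r: "u = v + p * r" by (metis add.commute diff_add_cancel dvdE)
  have "poly_mat p M = 0\<^sub>m d d" using p M unfolding is_min_poly_def by auto
  then show "poly_mat u M = poly_mat v M"
    using M poly_mat_carrier[OF M] by (simp add: r poly_mat_add[OF M] poly_mat_mult[OF M])
qed

text \<open>Conditions (b)--(c) for the pair (u, v) = (a_i, a_(i-n)), multiplied through by pp * pm
  so that the quotient p div (pp * pm) does not occur.\<close>

definition admissible_pair :: "'a::comm_ring_1 \<Rightarrow> 'a \<Rightarrow> 'a \<Rightarrow> 'a \<Rightarrow> 'a \<Rightarrow> 'a \<Rightarrow> bool" where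
  "admissible_pair p pp pm chi u v \<longleftrightarrow> pp dvd u \<and> pm dvd v \<and> p dvd pm * u - chi * pp * v"

definition admissible_seq :: "nat \<Rightarrow> 'a::comm_ring_1 \<Rightarrow> 'a \<Rightarrow> 'a \<Rightarrow> 'a \<Rightarrow> (int \<Rightarrow> 'a) \<Rightarrow> bool" where
  "admissible_seq n p pp pm chi \<alpha> \<longleftrightarrow>
     (\<forall>i. 1 \<le> i \<and> i \<le> int n - 1 \<longrightarrow> admissible_pair p pp pm chi (\<alpha> i) (\<alpha> (i - int n)))"

lemma admissible_pair_0: "admissible_pair p pp pm chi 0 0"
  unfolding admissible_pair_def by simp

lemma admissible_pair_add:
  assumes "admissible_pair p pp pm chi u v" "admissible_pair p pp pm chi u' v'"
  shows "admissible_pair p pp pm chi (u + u') (v + v')"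
proof -
  have "pm * (u + u') - chi * pp * (v + v') = (pm * u - chi * pp * v) + (pm * u' - chi * pp * v')"
    by (simp add: algebra_simps)
  then show ?thesis using assms unfolding admissible_pair_def by auto
qed

lemma admissible_pair_mult:
  assumes "admissible_pair p pp pm chi u v"
  shows "admissible_pair p pp pm chi (c * u) (c * v)"
proof -
  have "pm * (c * u) - chi * pp * (c * v) = c * (pm * u - chi * pp * v)"
    by (simp add: algebra_simps)
  then show ?thesis using assms unfolding admissible_pair_def by auto
qed

lemma admissible_pair_cross_dvd:
  assumes "admissible_pair p pp pm chi u v" "admissible_pair p pp pm chi u' v'"
  shows "p dvd u * v' - v * u'"
proof -
  obtain a a' b b' where u: "u = pp * a" and v: "v = pm * a'" and u': "u' = pp * b" and v': "v' = pm * b'"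
    using assms unfolding admissible_pair_def by (auto elim!: dvdE)
  have "u * v' - v * u' = (pm * u - chi * pp * v) * b' - a' * (pm * u' - chi * pp * v')"
    unfolding u v u' v' by (simp add: algebra_simps)
  then show ?thesis using assms unfolding admissible_pair_def by simp
qed

lemma admissible_pair_iff_factors:
  fixes p :: "'a::idom"
  assumes p: "p = pp * pm * q" "p \<noteq> 0"
  shows "admissible_pair p pp pm chi u v \<longleftrightarrow>
    (\<exists>a a'. p dvd u - pp * a \<and> p dvd v - pm * a' \<and> q dvd a - chi * a')"
proof
  assume adm: "admissible_pair p pp pm chi u v"
  then obtain a a' where u: "u = pp * a" and v: "v = pm * a'"
    unfolding admissible_pair_def by (auto elim!: dvdE)
  have "pp * pm * q dvd pp * pm * (a - chi * a')"
    using adm unfolding admissible_pair_def u v p(1) by (simp add: algebra_simps)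
  moreover have "pp * pm \<noteq> 0" using p by auto
  ultimately have "q dvd a - chi * a'" by simp
  then show "\<exists>a a'. p dvd u - pp * a \<and> p dvd v - pm * a' \<and> q dvd a - chi * a'"
    by (intro exI[of _ a] exI[of _ a']) (simp add: u v)
next
  assume "\<exists>a a'. p dvd u - pp * a \<and> p dvd v - pm * a' \<and> q dvd a - chi * a'"
  then obtain a a' r r' s where r: "u - pp * a = p * r" and r': "v - pm * a' = p * r'"
    and s: "a - chi * a' = q * s" by (auto elim!: dvdE)
  have u: "u = pp * (a + pm * q * r)" and v: "v = pm * (a' + pp * q * r')"
    using r r' p(1) by (simp_all add: algebra_simps)
  have "pm * u - chi * pp * v = p * (s + pm * r - chi * pp * r')"
    unfolding u v p(1) using s by (simp add: algebra_simps)
  then show "admissible_pair p pp pm chi u v" unfolding admissible_pair_def u v by auto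
qed

lemma admissible_seq_0: "admissible_seq n p pp pm chi (\<lambda>_. 0)"
  unfolding admissible_seq_def by (simp add: admissible_pair_0)

lemma admissible_seq_add:
  "admissible_seq n p pp pm chi \<alpha> \<Longrightarrow> admissible_seq n p pp pm chi \<beta> \<Longrightarrow>
   admissible_seq n p pp pm chi (\<lambda>i. \<alpha> i + \<beta> i)"
  unfolding admissible_seq_def by (simp add: admissible_pair_add)

lemma admissible_seq_mult:
  "admissible_seq n p pp pm chi \<alpha> \<Longrightarrow> admissible_seq n p pp pm chi (\<lambda>i. c * \<alpha> i)"
  unfolding admissible_seq_def by (simp add: admissible_pair_mult)

definition window_sum :: "nat \<Rightarrow> (int \<Rightarrow> 'a::comm_ring_1) \<Rightarrow> (int \<Rightarrow> 'a) \<Rightarrow> int \<Rightarrow> int \<Rightarrow> 'a" where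
  "window_sum n \<alpha> \<beta> m a = (\<Sum>k<n. \<alpha> (a + int k) * \<beta> (m - (a + int k)))"

lemma window_sum_shift:
  assumes "n = Suc n'"
  shows "window_sum n \<alpha> \<beta> m (a + 1)
    = window_sum n \<alpha> \<beta> m a + (\<alpha> (a + int n) * \<beta> (m - a - int n) - \<alpha> a * \<beta> (m - a))"
proof -
  have "window_sum n \<alpha> \<beta> m (a + 1)
      = (\<Sum>k<n'. \<alpha> (a + int (Suc k)) * \<beta> (m - (a + int (Suc k)))) + \<alpha> (a + int n) * \<beta> (m - a - int n)"
    unfolding window_sum_def assms sum.lessThan_Suc by (simp add: algebra_simps)
  moreover have "window_sum n \<alpha> \<beta> m a
      = \<alpha> a * \<beta> (m - a) + (\<Sum>k<n'. \<alpha> (a + int (Suc k)) * \<beta> (m - (a + int (Suc k))))"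
    unfolding window_sum_def assms sum.lessThan_Suc_shift by simp
  ultimately show ?thesis by simp
qed

lemma window_sum_shift_dvd:
  assumes "admissible_seq n p pp pm chi \<alpha>" "admissible_seq n p pp pm chi \<beta>"
    and "1 - int n \<le> a" "m - int n < a" "a < 0" "a < m"
  shows "p dvd window_sum n \<alpha> \<beta> m (a + 1) - window_sum n \<alpha> \<beta> m a"
proof -
  obtain n' where n: "n = Suc n'" using assms(3,5) by (cases n) auto
  have "admissible_pair p pp pm chi (\<alpha> (a + int n)) (\<alpha> a)"
    using assms(1)[unfolded admissible_seq_def, rule_format, of "a + int n"] assms(3,5) by simp
  moreover have "admissible_pair p pp pm chi (\<beta> (m - a)) (\<beta> (m - a - int n))"
    using assms(2)[unfolded admissible_seq_def, rule_format, of "m - a"] assms(4,6) by simp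
  ultimately show ?thesis
    by (simp add: window_sum_shift[OF n] admissible_pair_cross_dvd)
qed

lemma window_sum_congruent:
  assumes "admissible_seq n p pp pm chi \<alpha>" "admissible_seq n p pp pm chi \<beta>"
    and "max (1 - int n) (m - int n + 1) \<le> a" "a \<le> min 0 m"
    and "max (1 - int n) (m - int n + 1) \<le> b" "b \<le> min 0 m"
  shows "p dvd window_sum n \<alpha> \<beta> m b - window_sum n \<alpha> \<beta> m a"
proof -
  have slide: "p dvd window_sum n \<alpha> \<beta> m (c + int j) - window_sum n \<alpha> \<beta> m c"
    if "max (1 - int n) (m - int n + 1) \<le> c" "c + int j \<le> min 0 m" for c j
    using that(2)
  proof (induction j)
    case (Suc j)
    have "p dvd window_sum n \<alpha> \<beta> m (c + int j + 1) - window_sum n \<alpha> \<beta> m (c + int j)"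
      using Suc.prems that(1) by (intro window_sum_shift_dvd[OF assms(1,2)]) auto
    then have "p dvd (window_sum n \<alpha> \<beta> m (c + int j + 1) - window_sum n \<alpha> \<beta> m (c + int j))
        + (window_sum n \<alpha> \<beta> m (c + int j) - window_sum n \<alpha> \<beta> m c)"
      using Suc by (intro dvd_add) auto
    then show ?case by (simp add: ac_simps)
  qed simp
  show ?thesis
  proof (cases "a \<le> b")
    case True
    then obtain j where "b = a + int j" using zle_iff_zadd by blast
    then show ?thesis using slide assms by auto
  next
    case False
    then obtain j where "a = b + int j" using zle_iff_zadd[of b a] by auto
    then have "p dvd window_sum n \<alpha> \<beta> m a - window_sum n \<alpha> \<beta> m b" using slide assms by auto
    then show ?thesis by (metis dvd_minus_iff minus_diff_eq)
  qed
qed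

text \<open>By \<open>window_sum_congruent\<close>, any other window start in the admissible range gives the same
  value modulo p.\<close>

definition product_seq :: "nat \<Rightarrow> (int \<Rightarrow> 'a::comm_ring_1) \<Rightarrow> (int \<Rightarrow> 'a) \<Rightarrow> int \<Rightarrow> 'a" where
  "product_seq n \<alpha> \<beta> m = window_sum n \<alpha> \<beta> m (min 0 m)"

lemma block_sum_eq_window_sum:
  "(\<Sum>k<n. \<alpha> (I - int k) * \<beta> (int k - J)) = window_sum n \<alpha> \<beta> (I - J) (I - int n + 1)"
proof -
  have "(\<Sum>k<n. \<alpha> (I - int k) * \<beta> (int k - J))
      = (\<Sum>k<n. \<alpha> (I - int (n - Suc k)) * \<beta> (int (n - Suc k) - J))"
    by (rule sum.nat_diff_reindex[symmetric])
  also have "\<dots> = window_sum n \<alpha> \<beta> (I - J) (I - int n + 1)"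
    unfolding window_sum_def by (rule sum.cong) (auto simp: of_nat_diff algebra_simps)
  finally show ?thesis .
qed

lemma block_sum_eq_window_sum':
  "(\<Sum>k<n. \<beta> (I - int k) * \<alpha> (int k - J)) = window_sum n \<alpha> \<beta> (I - J) (- J)"
  unfolding window_sum_def by (rule sum.cong) (auto simp: algebra_simps)

lemma block_sums_congruent_product_seq:
  assumes "admissible_seq n p pp pm chi \<alpha>" "admissible_seq n p pp pm chi \<beta>"
    and "0 \<le> I" "I < int n" "0 \<le> J" "J < int n"
  shows "p dvd (\<Sum>k<n. \<alpha> (I - int k) * \<beta> (int k - J)) - product_seq n \<alpha> \<beta> (I - J)"
    and "p dvd (\<Sum>k<n. \<beta> (I - int k) * \<alpha> (int k - J)) - product_seq n \<alpha> \<beta> (I - J)"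
  using assms
  by (simp_all only: block_sum_eq_window_sum[of \<alpha>] block_sum_eq_window_sum' product_seq_def)
    (auto intro!: window_sum_congruent)

lemma window_sum_twisted_dvd:
  assumes \<alpha>: "admissible_seq n p pp pm chi \<alpha>" and \<beta>: "admissible_seq n p pp pm chi \<beta>"
    and m: "1 \<le> m" "m \<le> int n - 1"
  shows "p dvd pm * window_sum n \<alpha> \<beta> m 0 - chi * pp * window_sum n \<alpha> \<beta> (m - int n) (1 - int n)"
proof -
  obtain n' where n: "n = Suc n'" using m by (cases n) auto
  \<comment> \<open>Both windows pair \<open>\<alpha> (k + 1)\<close>, resp. \<open>\<alpha> (k + 1 - n)\<close>, with the same factor of \<open>\<beta>\<close>.\<close>
  define t where "t u v = pm * u - chi * pp * v" for u v
  have "window_sum n \<alpha> \<beta> m 0 = \<alpha> 0 * \<beta> m + (\<Sum>k<n'. \<alpha> (int k + 1) * \<beta> (m - int k - 1))"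
    unfolding window_sum_def n sum.lessThan_Suc_shift by (simp add: algebra_simps)
  moreover have "window_sum n \<alpha> \<beta> (m - int n) (1 - int n)
      = (\<Sum>k<n'. \<alpha> (int k + 1 - int n) * \<beta> (m - int k - 1)) + \<alpha> 0 * \<beta> (m - int n)"
    unfolding window_sum_def n sum.lessThan_Suc by (simp add: algebra_simps)
  ultimately have "pm * window_sum n \<alpha> \<beta> m 0 - chi * pp * window_sum n \<alpha> \<beta> (m - int n) (1 - int n)
      = \<alpha> 0 * t (\<beta> m) (\<beta> (m - int n))
        + (\<Sum>k<n'. t (\<alpha> (int k + 1)) (\<alpha> (int k + 1 - int n)) * \<beta> (m - int k - 1))"
    unfolding t_def by (simp add: algebra_simps sum_distrib_left sum_subtractf)
  moreover have "p dvd t (\<beta> m) (\<beta> (m - int n))"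
    using \<beta> m unfolding admissible_seq_def admissible_pair_def t_def by auto
  moreover have "p dvd t (\<alpha> (int k + 1)) (\<alpha> (int k + 1 - int n))" if "k < n'" for k
    using \<alpha>[unfolded admissible_seq_def admissible_pair_def, rule_format, of "int k + 1"] that n
    unfolding t_def by auto
  ultimately show ?thesis by (metis (no_types, lifting) dvd_add dvd_mult dvd_mult2 dvd_sum lessThan_iff)
qed

lemma product_seq_admissible:
  assumes \<alpha>: "admissible_seq n p pp pm chi \<alpha>" and \<beta>: "admissible_seq n p pp pm chi \<beta>"
  shows "admissible_seq n p pp pm chi (product_seq n \<alpha> \<beta>)"
  unfolding admissible_seq_def admissible_pair_def
proof (intro allI impI conjI)
  fix m :: int assume m: "1 \<le> m \<and> m \<le> int n - 1"
  have \<alpha>': "pp dvd \<alpha> i" "pm dvd \<alpha> (i - int n)" if "1 \<le> i" "i \<le> int n - 1" for i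
    using \<alpha> that unfolding admissible_seq_def admissible_pair_def by auto
  have \<beta>': "pp dvd \<beta> i" "pm dvd \<beta> (i - int n)" if "1 \<le> i" "i \<le> int n - 1" for i
    using \<beta> that unfolding admissible_seq_def admissible_pair_def by auto
  have pos: "product_seq n \<alpha> \<beta> m = window_sum n \<alpha> \<beta> m 0"
    and neg: "product_seq n \<alpha> \<beta> (m - int n) = window_sum n \<alpha> \<beta> (m - int n) (m - int n)"
    unfolding product_seq_def using m by simp_all
  show "pp dvd product_seq n \<alpha> \<beta> m"
    unfolding pos window_sum_def
  proof (rule dvd_sum)
    fix k assume "k \<in> {..<n}"
    then show "pp dvd \<alpha> (0 + int k) * \<beta> (m - (0 + int k))"
      using m \<alpha>'(1)[of "int k"] \<beta>'(1)[of m] by (cases "k = 0") auto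
  qed
  show "pm dvd product_seq n \<alpha> \<beta> (m - int n)"
    unfolding neg window_sum_def
  proof (rule dvd_sum)
    fix k assume "k \<in> {..<n}"
    then show "pm dvd \<alpha> (m - int n + int k) * \<beta> (m - int n - (m - int n + int k))"
      using m \<alpha>'(2)[of m] \<beta>'(2)[of "int n - int k"] by (cases "k = 0") auto
  qed
  have "p dvd pm * product_seq n \<alpha> \<beta> m - chi * pp * window_sum n \<alpha> \<beta> (m - int n) (1 - int n)"
    unfolding pos using window_sum_twisted_dvd[OF \<alpha> \<beta>] m by simp
  moreover have "p dvd chi * pp * (product_seq n \<alpha> \<beta> (m - int n)
      - window_sum n \<alpha> \<beta> (m - int n) (1 - int n))"
    unfolding product_seq_def using m by (intro dvd_mult window_sum_congruent[OF \<alpha> \<beta>]) auto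
  ultimately have "p dvd (pm * product_seq n \<alpha> \<beta> m - chi * pp * window_sum n \<alpha> \<beta> (m - int n) (1 - int n))
      - chi * pp * (product_seq n \<alpha> \<beta> (m - int n) - window_sum n \<alpha> \<beta> (m - int n) (1 - int n))"
    by (rule dvd_diff)
  then show "p dvd pm * product_seq n \<alpha> \<beta> m - chi * pp * product_seq n \<alpha> \<beta> (m - int n)"
    by (simp add: algebra_simps)
qed

lemma dim_block_toeplitz [simp]:
  "dim_row (block_toeplitz n d A) = n * d" "dim_col (block_toeplitz n d A) = n * d"
  unfolding block_toeplitz_def by auto

lemma index_block_toeplitz:
  "r < n * d \<Longrightarrow> c < n * d \<Longrightarrow>
   block_toeplitz n d A $$ (r,c) = A (int (r div d) - int (c div d)) $$ (r mod d, c mod d)"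
  unfolding block_toeplitz_def by auto

lemma block_index_bounds:
  fixes r n d :: nat
  assumes "r < n * d"
  shows "r div d < n" "r mod d < d"
  using assms
  by (simp_all add: less_mult_imp_div_less) (metis mod_less_divisor mult_0_right neq0_conv not_less_zero)

lemma block_toeplitz_cong:
  assumes "\<And>i. - (int n - 1) \<le> i \<Longrightarrow> i \<le> int n - 1 \<Longrightarrow> A i = B i"
  shows "block_toeplitz n d A = block_toeplitz n d B"
proof (rule eq_matI)
  fix r c assume "r < dim_row (block_toeplitz n d B)" "c < dim_col (block_toeplitz n d B)"
  then have rc: "r < n * d" "c < n * d" by auto
  then have "A (int (r div d) - int (c div d)) = B (int (r div d) - int (c div d))"
    using block_index_bounds(1)[OF rc(1)] block_index_bounds(1)[OF rc(2)] by (intro assms) auto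
  then show "block_toeplitz n d A $$ (r,c) = block_toeplitz n d B $$ (r,c)"
    using rc by (simp add: index_block_toeplitz)
qed auto

lemma block_toeplitz_0: "block_toeplitz n d (\<lambda>_. 0\<^sub>m d d) = 0\<^sub>m (n * d) (n * d)"
  by (rule eq_matI) (auto simp: index_block_toeplitz block_index_bounds)

lemma block_toeplitz_add:
  assumes A: "\<And>i. A i \<in> carrier_mat d d" and B: "\<And>i. B i \<in> carrier_mat d d"
  shows "block_toeplitz n d A + block_toeplitz n d B = block_toeplitz n d (\<lambda>i. A i + B i)"
proof (rule eq_matI)
  fix r c assume "r < dim_row (block_toeplitz n d (\<lambda>i. A i + B i))"
    "c < dim_col (block_toeplitz n d (\<lambda>i. A i + B i))"
  then have rc: "r < n * d" "c < n * d" by auto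
  then show "(block_toeplitz n d A + block_toeplitz n d B) $$ (r,c) = block_toeplitz n d (\<lambda>i. A i + B i) $$ (r,c)"
    using block_index_bounds[OF rc(1)] block_index_bounds[OF rc(2)] carrier_matD[OF A] carrier_matD[OF B]
    by (simp add: index_block_toeplitz)
qed auto

lemma block_toeplitz_smult:
  assumes A: "\<And>i. A i \<in> carrier_mat d d"
  shows "c \<cdot>\<^sub>m block_toeplitz n d A = block_toeplitz n d (\<lambda>i. c \<cdot>\<^sub>m A i)"
proof (rule eq_matI)
  fix r c' assume "r < dim_row (block_toeplitz n d (\<lambda>i. c \<cdot>\<^sub>m A i))"
    "c' < dim_col (block_toeplitz n d (\<lambda>i. c \<cdot>\<^sub>m A i))"
  then have rc: "r < n * d" "c' < n * d" by auto
  then show "(c \<cdot>\<^sub>m block_toeplitz n d A) $$ (r,c') = block_toeplitz n d (\<lambda>i. c \<cdot>\<^sub>m A i) $$ (r,c')"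
    using block_index_bounds[OF rc(1)] block_index_bounds[OF rc(2)] carrier_matD[OF A]
    by (simp add: index_block_toeplitz)
qed auto

lemma sum_lessThan_mult_nat:
  fixes n d :: nat
  shows "(\<Sum>l<n * d. g l) = (\<Sum>k<n. \<Sum>s<d. g (k * d + s))"
proof -
  have "sum g {k * d..<k * d + d} = (\<Sum>s<d. g (k * d + s))" for k
    using sum.shift_bounds_nat_ivl[of g 0 "k * d" d] by (simp add: add.commute lessThan_atLeast0)
  then show ?thesis by (simp add: sum.nat_group[symmetric])
qed

lemma index_mult_block_toeplitz:
  assumes A: "\<And>i. A i \<in> carrier_mat d d" and B: "\<And>i. B i \<in> carrier_mat d d"
    and rc: "r < n * d" "c < n * d"
  shows "(block_toeplitz n d A * block_toeplitz n d B) $$ (r,c)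
    = (\<Sum>k<n. (A (int (r div d) - int k) * B (int k - int (c div d))) $$ (r mod d, c mod d))"
proof -
  have "(block_toeplitz n d A * block_toeplitz n d B) $$ (r,c)
      = (\<Sum>l<n * d. block_toeplitz n d A $$ (r,l) * block_toeplitz n d B $$ (l,c))"
    using rc by (simp add: scalar_prod_def lessThan_atLeast0)
  also have "\<dots> = (\<Sum>k<n. \<Sum>s<d. block_toeplitz n d A $$ (r, k * d + s) * block_toeplitz n d B $$ (k * d + s, c))"
    by (rule sum_lessThan_mult_nat)
  also have "\<dots> = (\<Sum>k<n. (A (int (r div d) - int k) * B (int k - int (c div d))) $$ (r mod d, c mod d))"
  proof (rule sum.cong)
    fix k assume "k \<in> {..<n}"
    have "k * d + s < n * d" if "s < d" for s
    proof -
      have "k * d + s < Suc k * d" using that by simp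
      also have "\<dots> \<le> n * d" using \<open>k \<in> {..<n}\<close> by (intro mult_le_mono1) auto
      finally show ?thesis .
    qed
    moreover have "(k * d + s) div d = k" "(k * d + s) mod d = s" if "s < d" for s
      using that by auto
    ultimately show "(\<Sum>s<d. block_toeplitz n d A $$ (r, k * d + s) * block_toeplitz n d B $$ (k * d + s, c))
        = (A (int (r div d) - int k) * B (int k - int (c div d))) $$ (r mod d, c mod d)"
      using block_index_bounds[OF rc(1)] block_index_bounds[OF rc(2)] carrier_matD[OF A] carrier_matD[OF B]
      by (simp add: index_block_toeplitz rc scalar_prod_def lessThan_atLeast0)
  qed simp
  finally show ?thesis .
qed

lemma mult_block_toeplitz_poly_mat:
  fixes M :: "'a::field mat"
  assumes M: "M \<in> carrier_mat d d" and p: "is_min_poly M p"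
    and congr: "\<And>I J. 0 \<le> I \<Longrightarrow> I < int n \<Longrightarrow> 0 \<le> J \<Longrightarrow> J < int n \<Longrightarrow>
      p dvd (\<Sum>k<n. \<alpha> (I - int k) * \<beta> (int k - J)) - \<gamma> (I - J)"
  shows "block_toeplitz n d (\<lambda>i. poly_mat (\<alpha> i) M) * block_toeplitz n d (\<lambda>i. poly_mat (\<beta> i) M)
    = block_toeplitz n d (\<lambda>i. poly_mat (\<gamma> i) M)"
proof (rule eq_matI)
  fix r c assume "r < dim_row (block_toeplitz n d (\<lambda>i. poly_mat (\<gamma> i) M))"
    "c < dim_col (block_toeplitz n d (\<lambda>i. poly_mat (\<gamma> i) M))"
  then have rc: "r < n * d" "c < n * d" by auto
  let ?I = "int (r div d)" and ?J = "int (c div d)"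
  note bounds = block_index_bounds[OF rc(1)] block_index_bounds[OF rc(2)]
  have "(block_toeplitz n d (\<lambda>i. poly_mat (\<alpha> i) M) * block_toeplitz n d (\<lambda>i. poly_mat (\<beta> i) M)) $$ (r,c)
      = (\<Sum>k<n. poly_mat (\<alpha> (?I - int k) * \<beta> (int k - ?J)) M $$ (r mod d, c mod d))"
    using poly_mat_carrier[OF M]
    by (simp add: index_mult_block_toeplitz[OF _ _ rc] poly_mat_mult[OF M])
  also have "\<dots> = poly_mat (\<Sum>k<n. \<alpha> (?I - int k) * \<beta> (int k - ?J)) M $$ (r mod d, c mod d)"
    by (rule poly_mat_sum_index[OF M bounds(2,4), symmetric])
  also have "\<dots> = poly_mat (\<gamma> (?I - ?J)) M $$ (r mod d, c mod d)"
    by (subst poly_mat_eq_iff_min_poly_dvd[OF M p, THEN iffD2]) (use congr[of ?I ?J] bounds in auto)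
  finally show "(block_toeplitz n d (\<lambda>i. poly_mat (\<alpha> i) M) * block_toeplitz n d (\<lambda>i. poly_mat (\<beta> i) M)) $$ (r,c)
      = block_toeplitz n d (\<lambda>i. poly_mat (\<gamma> i) M) $$ (r,c)"
    using rc by (simp add: index_block_toeplitz)
qed auto

context
  fixes M :: "complex mat" and d :: nat and p pp pm chi :: "complex poly"
  assumes M: "M \<in> carrier_mat d d" and min_poly: "is_min_poly M p" and factors: "pp * pm dvd p"
begin

lemma admissible_pair_iff_poly_mat:
  "admissible_pair p pp pm chi u v \<longleftrightarrow>
    (\<exists>a a'. poly_mat u M = poly_mat (pp * a) M \<and> poly_mat v M = poly_mat (pm * a') M \<and>
       p div (pp * pm) dvd a - chi * a')"
proof -
  have "p = pp * pm * (p div (pp * pm))" using factors by simp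
  moreover have "p \<noteq> 0" using min_poly unfolding is_min_poly_def by auto
  ultimately show ?thesis
    by (simp add: admissible_pair_iff_factors poly_mat_eq_iff_min_poly_dvd[OF M min_poly])
qed

lemma block_toeplitz_in_frakB:
  assumes "admissible_seq n p pp pm chi \<alpha>"
  shows "block_toeplitz n d (\<lambda>i. poly_mat (\<alpha> i) M) \<in> frakB n M p pp pm chi"
  using assms M unfolding frakB_def poly_algebra_def admissible_seq_def admissible_pair_iff_poly_mat
  by (intro CollectI exI[of _ "\<lambda>i. poly_mat (\<alpha> i) M"]) auto

lemma frakBE:
  assumes "X \<in> frakB n M p pp pm chi"
  obtains \<alpha> where "X = block_toeplitz n d (\<lambda>i. poly_mat (\<alpha> i) M)" "admissible_seq n p pp pm chi \<alpha>"
proof -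
  obtain A where X: "X = block_toeplitz n d A"
    and P: "\<And>i. - (int n - 1) \<le> i \<Longrightarrow> i \<le> int n - 1 \<Longrightarrow> A i \<in> poly_algebra M"
    and pair: "\<And>i. 1 \<le> i \<Longrightarrow> i \<le> int n - 1 \<Longrightarrow>
      \<exists>a a'. A i = poly_mat (pp * a) M \<and> A (i - int n) = poly_mat (pm * a') M \<and>
        p div (pp * pm) dvd a - chi * a'"
    using assms M unfolding frakB_def by auto
  define \<alpha> where "\<alpha> i = (SOME a. A i = poly_mat a M)" for i
  have \<alpha>: "poly_mat (\<alpha> i) M = A i" if "- (int n - 1) \<le> i" "i \<le> int n - 1" for i
    using P[OF that] unfolding \<alpha>_def poly_algebra_def by (metis (mono_tags, lifting) mem_Collect_eq someI)
  have "X = block_toeplitz n d (\<lambda>i. poly_mat (\<alpha> i) M)"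
    unfolding X by (rule block_toeplitz_cong) (simp add: \<alpha>)
  moreover have "admissible_seq n p pp pm chi \<alpha>"
    unfolding admissible_seq_def admissible_pair_iff_poly_mat using pair \<alpha> by auto
  ultimately show ?thesis using that by blast
qed

lemma mult_block_toeplitz_admissible:
  assumes "admissible_seq n p pp pm chi \<alpha>" "admissible_seq n p pp pm chi \<beta>"
  shows "block_toeplitz n d (\<lambda>i. poly_mat (\<alpha> i) M) * block_toeplitz n d (\<lambda>i. poly_mat (\<beta> i) M)
      = block_toeplitz n d (\<lambda>i. poly_mat (product_seq n \<alpha> \<beta> i) M)"
    and "block_toeplitz n d (\<lambda>i. poly_mat (\<beta> i) M) * block_toeplitz n d (\<lambda>i. poly_mat (\<alpha> i) M)
      = block_toeplitz n d (\<lambda>i. poly_mat (product_seq n \<alpha> \<beta> i) M)"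
  using block_sums_congruent_product_seq[OF assms]
  by (auto intro!: mult_block_toeplitz_poly_mat[OF M min_poly])

lemma frakB_subset_toeplitz_space: "frakB n M p pp pm chi \<subseteq> toeplitz_space n d"
  unfolding toeplitz_space_def using poly_mat_carrier[OF M] by (blast elim: frakBE)

lemma zero_mem_frakB: "0\<^sub>m (n * d) (n * d) \<in> frakB n M p pp pm chi"
proof -
  have "block_toeplitz n d (\<lambda>i. poly_mat 0 M) = 0\<^sub>m (n * d) (n * d)"
    by (simp add: poly_mat_0[OF M] block_toeplitz_0)
  then show ?thesis using block_toeplitz_in_frakB[OF admissible_seq_0] by metis
qed

lemma add_mem_frakB:
  assumes "X \<in> frakB n M p pp pm chi" "Y \<in> frakB n M p pp pm chi"
  shows "X + Y \<in> frakB n M p pp pm chi"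
proof -
  obtain \<alpha> \<beta> where X: "X = block_toeplitz n d (\<lambda>i. poly_mat (\<alpha> i) M)"
    and Y: "Y = block_toeplitz n d (\<lambda>i. poly_mat (\<beta> i) M)"
    and adm: "admissible_seq n p pp pm chi \<alpha>" "admissible_seq n p pp pm chi \<beta>"
    using assms by (metis frakBE)
  have "X + Y = block_toeplitz n d (\<lambda>i. poly_mat (\<alpha> i + \<beta> i) M)"
    unfolding X Y using poly_mat_carrier[OF M] by (simp add: block_toeplitz_add poly_mat_add[OF M])
  then show ?thesis using block_toeplitz_in_frakB[OF admissible_seq_add[OF adm]] by simp
qed

lemma smult_mem_frakB:
  assumes "X \<in> frakB n M p pp pm chi"
  shows "c \<cdot>\<^sub>m X \<in> frakB n M p pp pm chi"
proof -
  obtain \<alpha> where X: "X = block_toeplitz n d (\<lambda>i. poly_mat (\<alpha> i) M)"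
    and adm: "admissible_seq n p pp pm chi \<alpha>"
    using assms by (metis frakBE)
  have "c \<cdot>\<^sub>m X = block_toeplitz n d (\<lambda>i. poly_mat ([:c:] * \<alpha> i) M)"
    unfolding X using poly_mat_carrier[OF M] by (simp add: block_toeplitz_smult poly_mat_smult[OF M])
  then show ?thesis using block_toeplitz_in_frakB[OF admissible_seq_mult[OF adm, of "[:c:]"]] by simp
qed

lemma mult_mem_frakB_commute:
  assumes "X \<in> frakB n M p pp pm chi" "Y \<in> frakB n M p pp pm chi"
  shows "X * Y \<in> frakB n M p pp pm chi" and "X * Y = Y * X"
proof -
  obtain \<alpha> \<beta> where X: "X = block_toeplitz n d (\<lambda>i. poly_mat (\<alpha> i) M)"
    and Y: "Y = block_toeplitz n d (\<lambda>i. poly_mat (\<beta> i) M)"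
    and adm: "admissible_seq n p pp pm chi \<alpha>" "admissible_seq n p pp pm chi \<beta>"
    using assms by (metis frakBE)
  show "X * Y \<in> frakB n M p pp pm chi"
    unfolding X Y mult_block_toeplitz_admissible(1)[OF adm]
    by (rule block_toeplitz_in_frakB[OF product_seq_admissible[OF adm]])
  show "X * Y = Y * X"
    unfolding X Y mult_block_toeplitz_admissible[OF adm] ..
qed

end

theorem theorem6p2:
  fixes M :: "complex mat" and d n :: nat and p pp pm chi :: "complex poly"
  assumes "M \<in> carrier_mat d d"
    and "nonderogatory M"
    and "is_min_poly M p"
    and "pp * pm dvd p"
    and "coprime chi p"
  shows "frakB n M p pp pm chi \<subseteq> toeplitz_space n d
    \<and> 0\<^sub>m (n*d) (n*d) \<in> frakB n M p pp pm chi
    \<and> (\<forall>X \<in> frakB n M p pp pm chi. \<forall>Y \<in> frakB n M p pp pm chi. X + Y \<in> frakB n M p pp pm chi)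
    \<and> (\<forall>c::complex. \<forall>X \<in> frakB n M p pp pm chi. c \<cdot>\<^sub>m X \<in> frakB n M p pp pm chi)
    \<and> (\<forall>X \<in> frakB n M p pp pm chi. \<forall>Y \<in> frakB n M p pp pm chi. X * Y \<in> frakB n M p pp pm chi)
    \<and> (\<forall>X \<in> frakB n M p pp pm chi. \<forall>Y \<in> frakB n M p pp pm chi. X * Y = Y * X)"
  using frakB_subset_toeplitz_space[OF assms(1,3,4)] zero_mem_frakB[OF assms(1,3,4)]
    add_mem_frakB[OF assms(1,3,4)] smult_mem_frakB[OF assms(1,3,4)]
    mult_mem_frakB_commute[OF assms(1,3,4)]
  by simp

end
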